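(* Let $N\ge 1$, let $A, A_{\mathrm a}, A_{\mathrm{out}}\in\mathbb{R}^{2N\times 2N}$ be entrywise nonnegative column-stochastic matrices (i.e. $\mathbf{1}_{2N}^\top A=\mathbf{1}_{2N}^\top$, and likewise for $A_{\mathrm a}$, $A_{\mathrm{out}}$), let $P_{\mathrm{ON}}>0$ and $c_{\mathrm{ON}}:=P_{\mathrm{ON}}[\mathbf{1}_N^\top\ \mathbf{0}_N^\top]\in\mathbb{R}^{1\times 2N}$, and let $x_0\in\mathbb{R}^{2N}$ satisfy $x_0\succeq 0$, $\mathbf{1}_{2N}^\top x_0=1$ and $Ax_0=x_0$. Fix an index $j$ and let $x_{\mathrm{out}}=e_j\in\mathbb{R}^{2N}$ be the $j$-th standard basis vector. For $m\ge 1$ define the row vectors $h_m^\top=c_{\mathrm{ON}}A^m$, $h_{\mathrm a,m}^\top=c_{\mathrm{ON}}A_{\mathrm a}^m$, and the scalar $h^x_m=c_{\mathrm{ON}}(A_{\mathrm{out}}^m-A_{\mathrm a}^m)x_{\mathrm{out}}$. Fix an integer $T_{\mathrm{hold}}\ge 1$. Call $P_{\mathrm{hold}}\in\mathbb{R}$ feasible for the full problem if there exist $u[0],\dots,u[T_{\mathrm{hold}}-1]\in\mathbb{R}^{2N}$ and state sequences defined by $x[0]=x_0$, $x_{\mathrm a}[0]=\mathbf{0}_{2N}$, $x[k+1]=A(x[k]-u[k])$, $x_{\mathrm a}[k+1]=A_{\mathrm a}(x_{\mathrm a}[k]+u[k])$, such that $0\preceq u[k]\preceq x[k]$ (entrywise)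 for all $k$, and $$\sum_{n=0}^{k-1}c_{\mathrm{ON}}\big(A^{k-n}-A_{\mathrm a}^{k-n}\big)u[n]\ \ge\ P_{\mathrm{hold}}\quad\text{for all }k=1,\dots,T_{\mathrm{hold}}.$$ Call $\bar P_{\mathrm{hold}}\in\mathbb{R}$ feasible for the outer problem if there exist $\bar u[0],\dots,\bar u[T_{\mathrm{hold}}-1]\in\mathbb{R}^{2N}$ with $\bar u[k]\succeq 0$ for all $k$, $\sum_{k=0}^{T_{\mathrm{hold}}-1}\mathbf{1}_{2N}^\top\bar u[k]\le 1$, and $$\sum_{n=0}^{k-1}c_{\mathrm{ON}}\big(A_{\mathrm{out}}^{k-n}-A_{\mathrm a}^{k-n}\big)\bar u[n]\ \ge\ \bar P_{\mathrm{hold}}\quad\text{for all }k=1,\dots,T_{\mathrm{hold}}.$$ Suppose that $h^x_{k-n}\mathbf{1}_{2N}\succeq h_{k-n}-h_{\mathrm a,k-n}$ (entrywise) for all $k\le T_{\mathrm{hold}}$ and all $n<k$. Then the set of values feasible for the full problem is contained in the set of values feasible for the outer problem; in particular the optimal (maximal) value of $\bar P_{\mathrm{hold}}$ in the outer problem is at least the optimal value of $P_{\mathrm{hold}}$ in the full problem, so the reach-and-hold set obtained from the outer problem is an outer approximation of the one obtained from the full problem.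
   Context: Model: a fleet of thermostatically controlled loads is described by a Markov chain on $2N$ temperature bins ($N$ ON bins followed by $N$ OFF bins). $x[k]$ is the distribution of the non-actuated population, $x_{\mathrm a}[k]$ that of the population that has received a setpoint change, $u[k]$ the fraction of each bin actuated at step $k$; $A$ is the transition matrix under the original setpoint, $A_{\mathrm a}$ under the new setpoint, and $A_{\mathrm{out}}$ the transition matrix of an auxiliary ("fictitious") system (in the paper, one with setpoint $T_{\mathrm{set}}-\Delta T/2$ and deadband equal to one bin width, with $x_{\mathrm{out}}$ the indicator of the bin at temperature $T_{\mathrm{set}}-\Delta T/2$). The quantity $\sum_{n<k}c_{\mathrm{ON}}(A^{k-n}-A_{\mathrm a}^{k-n})u[n]$ is the reduction in aggregate power from the nominal value $c_{\mathrm{ON}}x_0$ at step $k$. The reach-and-hold set is the set of pairs $(P_{\mathrm{hold}},T_{\mathrm{hold}})$ such that $P_{\mathrm{hold}}$ is feasible for the given $T_{\mathrm{hold}}$. *)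

theory Defs
  imports Complex_Main
begin

text \<open>Square matrices of size d are represented as functions nat => nat => real,
  vectors as nat => real; only indices below d are meaningful.\<close>

definition mat_mul :: "nat \<Rightarrow> (nat \<Rightarrow> nat \<Rightarrow> real) \<Rightarrow> (nat \<Rightarrow> nat \<Rightarrow> real) \<Rightarrow> (nat \<Rightarrow> nat \<Rightarrow> real)" where
  "mat_mul d M P = (\<lambda>i j. \<Sum>l<d. M i l * P l j)"

definition mat_id :: "nat \<Rightarrow> nat \<Rightarrow> real" where
  "mat_id = (\<lambda>i j. if i = j then 1 else 0)"

fun mat_pow :: "nat \<Rightarrow> (nat \<Rightarrow> nat \<Rightarrow> real) \<Rightarrow> nat \<Rightarrow> (nat \<Rightarrow> nat \<Rightarrow> real)" where
  "mat_pow d M 0 = mat_id"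
| "mat_pow d M (Suc m) = mat_mul d (mat_pow d M m) M"

definition mat_vec :: "nat \<Rightarrow> (nat \<Rightarrow> nat \<Rightarrow> real) \<Rightarrow> (nat \<Rightarrow> real) \<Rightarrow> (nat \<Rightarrow> real)" where
  "mat_vec d M v = (\<lambda>i. \<Sum>j<d. M i j * v j)"

definition row_vec :: "nat \<Rightarrow> (nat \<Rightarrow> real) \<Rightarrow> (nat \<Rightarrow> nat \<Rightarrow> real) \<Rightarrow> (nat \<Rightarrow> real)" where
  "row_vec d r M = (\<lambda>j. \<Sum>i<d. r i * M i j)"

definition dotp :: "nat \<Rightarrow> (nat \<Rightarrow> real) \<Rightarrow> (nat \<Rightarrow> real) \<Rightarrow> real" where
  "dotp d r v = (\<Sum>i<d. r i * v i)"

definition col_stochastic :: "nat \<Rightarrow> (nat \<Rightarrow> nat \<Rightarrow> real) \<Rightarrow> bool" where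
  "col_stochastic d M \<longleftrightarrow> (\<forall>i<d. \<forall>j<d. 0 \<le> M i j) \<and> (\<forall>j<d. (\<Sum>i<d. M i j) = 1)"

definition c_on :: "nat \<Rightarrow> real \<Rightarrow> (nat \<Rightarrow> real)" where
  "c_on N P_on = (\<lambda>i. if i < N then P_on else 0)"

fun x_state :: "nat \<Rightarrow> (nat \<Rightarrow> nat \<Rightarrow> real) \<Rightarrow> (nat \<Rightarrow> real) \<Rightarrow> (nat \<Rightarrow> nat \<Rightarrow> real) \<Rightarrow> nat \<Rightarrow> (nat \<Rightarrow> real)" where
  "x_state d A x0 u 0 = x0"
| "x_state d A x0 u (Suc k) = mat_vec d A (\<lambda>i. x_state d A x0 u k i - u k i)"

fun xa_state :: "nat \<Rightarrow> (nat \<Rightarrow> nat \<Rightarrow> real) \<Rightarrow> (nat \<Rightarrow> nat \<Rightarrow> real) \<Rightarrow> nat \<Rightarrow> (nat \<Rightarrow> real)" where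
  "xa_state d Aa u 0 = (\<lambda>_. 0)"
| "xa_state d Aa u (Suc k) = mat_vec d Aa (\<lambda>i. xa_state d Aa u k i + u k i)"

definition power_red :: "nat \<Rightarrow> (nat \<Rightarrow> real) \<Rightarrow> (nat \<Rightarrow> nat \<Rightarrow> real) \<Rightarrow> (nat \<Rightarrow> nat \<Rightarrow> real)
    \<Rightarrow> (nat \<Rightarrow> nat \<Rightarrow> real) \<Rightarrow> nat \<Rightarrow> real" where
  "power_red d c M1 M2 u k =
     (\<Sum>n<k. dotp d (row_vec d c (\<lambda>i j. mat_pow d M1 (k - n) i j - mat_pow d M2 (k - n) i j)) (u n))"

definition feasible_full :: "nat \<Rightarrow> (nat \<Rightarrow> nat \<Rightarrow> real) \<Rightarrow> (nat \<Rightarrow> nat \<Rightarrow> real) \<Rightarrow> real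
    \<Rightarrow> (nat \<Rightarrow> real) \<Rightarrow> nat \<Rightarrow> real \<Rightarrow> bool" where
  "feasible_full N A Aa P_on x0 T P_hold \<longleftrightarrow>
     (\<exists>u :: nat \<Rightarrow> nat \<Rightarrow> real.
        (\<forall>k<T. \<forall>i<2*N. 0 \<le> u k i \<and> u k i \<le> x_state (2*N) A x0 u k i) \<and>
        (\<forall>k\<in>{1..T}. power_red (2*N) (c_on N P_on) A Aa u k \<ge> P_hold))"

definition feasible_outer :: "nat \<Rightarrow> (nat \<Rightarrow> nat \<Rightarrow> real) \<Rightarrow> (nat \<Rightarrow> nat \<Rightarrow> real) \<Rightarrow> real
    \<Rightarrow> nat \<Rightarrow> real \<Rightarrow> bool" where
  "feasible_outer N Aout Aa P_on T P_hold \<longleftrightarrow>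
     (\<exists>u :: nat \<Rightarrow> nat \<Rightarrow> real.
        (\<forall>k<T. \<forall>i<2*N. 0 \<le> u k i) \<and>
        (\<Sum>k<T. \<Sum>i<2*N. u k i) \<le> 1 \<and>
        (\<forall>k\<in>{1..T}. power_red (2*N) (c_on N P_on) Aout Aa u k \<ge> P_hold))"

end

theory Submission
  imports Defs
begin

text \<open>Given an admissible actuation sequence u of the full problem, move all mass actuated
  at step n, s[n] = 1^T u[n], into the single bin j. Column stochasticity of A makes the
  non-actuated mass at step k equal to 1 minus the mass actuated before k, and u[k] <= x[k]
  then bounds the total actuated mass by 1. By hypothesis every entry of
  c_ON (A^m - A_a^m) is at most h^x_m, so for u[n] >= 0 each summand of the power reduction
  is at most h^x_m s[n], which is exactly the summand produced by the concentrated actuation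
  under A_out. Besides j < 2N and T >= 1, only the column stochasticity of A, the unit mass of x0 and
  the entrywise bound on h_m - h_a,m are needed.\<close>

lemma sum_mat_vec_col_stochastic:
  assumes "col_stochastic d M"
  shows "(\<Sum>i<d. mat_vec d M v i) = (\<Sum>j<d. v j)"
proof -
  have "(\<Sum>i<d. mat_vec d M v i) = (\<Sum>j<d. (\<Sum>i<d. M i j) * v j)"
    unfolding mat_vec_def sum_distrib_left sum_distrib_right by (rule sum.swap)
  also have "\<dots> = (\<Sum>j<d. v j)"
    using assms unfolding col_stochastic_def by simp
  finally show ?thesis .
qed

lemma sum_x_state:
  assumes "col_stochastic d A"
  shows "(\<Sum>i<d. x_state d A x0 u k i) = (\<Sum>i<d. x0 i) - (\<Sum>n<k. \<Sum>i<d. u n i)"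
proof (induction k)
  case 0
  then show ?case by simp
next
  case (Suc k)
  have "(\<Sum>i<d. x_state d A x0 u (Suc k) i) = (\<Sum>i<d. x_state d A x0 u k i - u k i)"
    using sum_mat_vec_col_stochastic[OF assms] by simp
  also have "\<dots> = (\<Sum>i<d. x_state d A x0 u k i) - (\<Sum>i<d. u k i)"
    by (simp add: sum_subtractf)
  finally show ?case
    using Suc.IH by simp
qed

lemma sum_actuation_le_initial_mass:
  assumes "col_stochastic d A" and "0 < T"
    and "\<forall>k<T. \<forall>i<d. u k i \<le> x_state d A x0 u k i"
  shows "(\<Sum>k<T. \<Sum>i<d. u k i) \<le> (\<Sum>i<d. x0 i)"
proof -
  obtain T' where T': "T = Suc T'"
    using \<open>0 < T\<close> gr0_implies_Suc by blast
  have "(\<Sum>i<d. u T' i) \<le> (\<Sum>i<d. x_state d A x0 u T' i)"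
    using assms(3) T' by (intro sum_mono) auto
  also have "\<dots> = (\<Sum>i<d. x0 i) - (\<Sum>n<T'. \<Sum>i<d. u n i)"
    by (rule sum_x_state[OF assms(1)])
  finally show ?thesis
    using T' by simp
qed

lemma row_vec_diff:
  "row_vec d c (\<lambda>i j. M i j - P i j) = (\<lambda>j. row_vec d c M j - row_vec d c P j)"
  unfolding row_vec_def by (simp add: algebra_simps sum_subtractf)

lemma dotp_row_vec_scaled_basis:
  assumes "j < d"
  shows "dotp d (row_vec d c M) (\<lambda>l. s * (if l = j then 1 else 0))
       = s * dotp d c (mat_vec d M (\<lambda>l. if l = j then 1 else 0))"
  using assms unfolding dotp_def row_vec_def mat_vec_def
  by (simp add: sum_distrib_left mult_ac if_distrib sum.delta cong: if_cong)

lemma dotp_le_bound_times_sum: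
  assumes "\<forall>i<d. r i \<le> h" and "\<forall>i<d. 0 \<le> v i"
  shows "dotp d r v \<le> h * (\<Sum>i<d. v i)"
  unfolding dotp_def sum_distrib_left
  using assms by (intro sum_mono mult_right_mono) auto

lemma dotp_row_vec_le_concentrated:
  assumes "j < d" and "\<forall>i<d. 0 \<le> v i"
    and "\<forall>i<d. row_vec d c M i \<le> dotp d c (mat_vec d M' (\<lambda>l. if l = j then 1 else 0))"
  shows "dotp d (row_vec d c M) v
       \<le> dotp d (row_vec d c M') (\<lambda>l. (\<Sum>i<d. v i) * (if l = j then 1 else 0))"
  using dotp_le_bound_times_sum[OF assms(3,2)]
  by (simp add: dotp_row_vec_scaled_basis[OF assms(1)] mult.commute)

lemma power_red_le_concentrated:
  assumes "j < d" and "\<forall>n<k. \<forall>i<d. 0 \<le> u n i"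
    and "\<forall>n<k. \<forall>i<d.
       row_vec d c (mat_pow d M1 (k - n)) i - row_vec d c (mat_pow d M3 (k - n)) i
       \<le> dotp d c (mat_vec d (\<lambda>a b. mat_pow d M2 (k - n) a b - mat_pow d M3 (k - n) a b)
           (\<lambda>l. if l = j then 1 else 0))"
  shows "power_red d c M1 M3 u k
       \<le> power_red d c M2 M3 (\<lambda>n l. (\<Sum>i<d. u n i) * (if l = j then 1 else 0)) k"
  unfolding power_red_def
  using assms by (intro sum_mono dotp_row_vec_le_concentrated) (auto simp: row_vec_diff)

theorem proposition1:
  fixes N :: nat and A Aa Aout :: "nat \<Rightarrow> nat \<Rightarrow> real" and P_on :: real
    and x0 :: "nat \<Rightarrow> real" and j :: nat and T :: nat
  assumes N: "N \<ge> 1"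
    and A: "col_stochastic (2*N) A"
    and Aa: "col_stochastic (2*N) Aa"
    and Aout: "col_stochastic (2*N) Aout"
    and Pon: "P_on > 0"
    and x0_nonneg: "\<forall>i<2*N. 0 \<le> x0 i"
    and x0_sum: "(\<Sum>i<2*N. x0 i) = 1"
    and x0_fix: "\<forall>i<2*N. mat_vec (2*N) A x0 i = x0 i"
    and j: "j < 2*N"
    and T: "T \<ge> 1"
    and hyp: "\<forall>k\<le>T. \<forall>n<k. \<forall>i<2*N.
       dotp (2*N) (c_on N P_on)
         (mat_vec (2*N) (\<lambda>a b. mat_pow (2*N) Aout (k - n) a b - mat_pow (2*N) Aa (k - n) a b)
           (\<lambda>l. if l = j then 1 else 0))
       \<ge> row_vec (2*N) (c_on N P_on) (mat_pow (2*N) A (k - n)) i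
         - row_vec (2*N) (c_on N P_on) (mat_pow (2*N) Aa (k - n)) i"
  shows "{P. feasible_full N A Aa P_on x0 T P} \<subseteq> {P. feasible_outer N Aout Aa P_on T P}"
proof
  fix P assume "P \<in> {P. feasible_full N A Aa P_on x0 T P}"
  then obtain u where u_bounds: "\<forall>k<T. \<forall>i<2*N. 0 \<le> u k i \<and> u k i \<le> x_state (2*N) A x0 u k i"
    and u_hold: "\<forall>k\<in>{1..T}. P \<le> power_red (2*N) (c_on N P_on) A Aa u k"
    unfolding feasible_full_def by auto
  define ub where "ub n l = (\<Sum>i<2*N. u n i) * (if l = j then 1 else 0)" for n l
  have "\<forall>k<T. \<forall>i<2*N. 0 \<le> ub k i"
    using u_bounds unfolding ub_def by (auto intro: sum_nonneg)
  moreover have "(\<Sum>k<T. \<Sum>i<2*N. ub k i) \<le> 1"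
    using sum_actuation_le_initial_mass[OF A, of T u x0] u_bounds T j x0_sum
    by (simp add: ub_def if_distrib sum.delta cong: if_cong)
  moreover have "P \<le> power_red (2*N) (c_on N P_on) Aout Aa ub k" if "k \<in> {1..T}" for k
  proof -
    have "power_red (2*N) (c_on N P_on) A Aa u k \<le> power_red (2*N) (c_on N P_on) Aout Aa ub k"
      unfolding ub_def using that j u_bounds hyp
      by (intro power_red_le_concentrated) auto
    then show ?thesis
      using u_hold that by fastforce
  qed
  ultimately show "P \<in> {P. feasible_outer N Aout Aa P_on T P}"
    unfolding feasible_outer_def by blast
qed

end
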